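(* Let $Q$ be a convex quadrilateral with vertices $0,1,z,w$ in counterclockwise order, and let $X\in(0,\infty)$. Then the equation $$-\frac{(1-u)(w-u)}{(0-u)(z-u)}=X$$ in the unknown $u\in\mathbb{C}$ has two solutions counted with multiplicity, and both lie in the interior of $Q$. *)

theory Defs
  imports "HOL-Analysis.Analysis" "HOL-Computational_Algebra.Polynomial"
begin

definition left_turn :: "complex \<Rightarrow> complex \<Rightarrow> complex \<Rightarrow> bool" where
  "left_turn a b c \<longleftrightarrow> Im (cnj (b - a) * (c - b)) > 0"

definition ccw_convex_quad :: "complex \<Rightarrow> complex \<Rightarrow> complex \<Rightarrow> complex \<Rightarrow> bool" where
  "ccw_convex_quad a b c d \<longleftrightarrow>
     left_turn a b c \<and> left_turn b c d \<and> left_turn c d a \<and> left_turn d a b"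

end

(* With (a, b, c, d) = (0, 1, z, w) the equation reads (u - b)(u - d) + X (u - a)(u - c) = 0.
   Multiplying by cnj ((u - a)(u - d)) and taking imaginary parts shows that a root lies on the
   same side of the edge ab as of the opposite edge cd, and likewise for bc and da. The four
   edge orientations are affine in u, so they satisfy a linear relation, whose coefficients are
   positive for a convex quadrilateral; they also sum to twice its area. Hence all four are
   positive: the root lies strictly inside every edge. *)

theory Submission
  imports Defs "HOL-Computational_Algebra.Fundamental_Theorem_Algebra"
begin

definition orient :: "complex \<Rightarrow> complex \<Rightarrow> complex \<Rightarrow> real" where
  "orient a b c = Im (cnj (b - a) * (c - a))"

lemma left_turn_iff_orient: "left_turn a b c \<longleftrightarrow> 0 < orient a b c"
  unfolding left_turn_def orient_def by (simp add: algebra_simps)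

lemma orient_rotate: "orient b c a = orient a b c"
  unfolding orient_def by (simp add: algebra_simps)

lemma orient_swap: "orient b a c = - orient a b c"
  unfolding orient_def by (simp add: algebra_simps)

lemma left_turn_distinct:
  assumes "left_turn a b c"
  shows "a \<noteq> b" "b \<noteq> c" "a \<noteq> c"
  using assms unfolding left_turn_iff_orient orient_def by (auto simp: algebra_simps)

lemma orient_barycentric:
  "orient a b c *\<^sub>R u = orient b c u *\<^sub>R a + orient c a u *\<^sub>R b + orient a b u *\<^sub>R c"
  unfolding orient_def by (simp add: complex_eq_iff algebra_simps)

lemma orient_triangle_sum: "orient b c u + orient c a u + orient a b u = orient a b c"
  unfolding orient_def by (simp add: algebra_simps)

lemma orient_quad_sum:
  "orient a b u + orient b c u + orient c d u + orient d a u = orient a b c + orient a c d"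
  unfolding orient_def by (simp add: algebra_simps)

(* The edge orientations are affine in u, hence linearly dependent; the coefficients are
   found by evaluating at the four vertices. *)
lemma orient_quad_relation:
  "orient a c d * orient b c d * orient a b u + orient a b c * orient a b d * orient c d u
   = orient a c d * orient a b d * orient b c u + orient a b c * orient b c d * orient d a u"
  unfolding orient_def by (simp add: algebra_simps)

lemma mem_convex_hull_triangle:
  assumes "0 \<le> orient b c u" "0 \<le> orient c a u" "0 \<le> orient a b u" "0 < orient a b c"
  shows "u \<in> convex hull {a, b, c}"
proof -
  let ?k = "orient a b c"
  have "?k *\<^sub>R ((orient b c u / ?k) *\<^sub>R a + (orient c a u / ?k) *\<^sub>R b + (orient a b u / ?k) *\<^sub>R c)
      = orient b c u *\<^sub>R a + orient c a u *\<^sub>R b + orient a b u *\<^sub>R c"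
    using assms(4) by (simp add: scaleR_add_right)
  also have "\<dots> = ?k *\<^sub>R u"
    by (rule orient_barycentric[symmetric])
  finally have "u = (orient b c u / ?k) *\<^sub>R a + (orient c a u / ?k) *\<^sub>R b + (orient a b u / ?k) *\<^sub>R c"
    using assms(4) by simp
  moreover have "orient b c u / ?k + orient c a u / ?k + orient a b u / ?k = 1"
    using assms(4) orient_triangle_sum[of b c u a] by (simp add: add_divide_distrib[symmetric])
  ultimately show ?thesis
    unfolding convex_hull_3 using assms by (blast intro: divide_nonneg_pos)
qed

lemma mem_convex_hull_quad:
  assumes "0 < orient a b u" "0 < orient b c u" "0 < orient c d u" "0 < orient d a u"
  shows "u \<in> convex hull {a, b, c, d}"
proof (cases "0 \<le> orient c a u")
  case True
  then have "0 < orient a b c"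
    using assms orient_triangle_sum[of b c u a] by linarith
  with True assms have "u \<in> convex hull {a, b, c}"
    by (intro mem_convex_hull_triangle) auto
  then show ?thesis
    by (rule subsetD[OF hull_mono, rotated]) auto
next
  case False
  then have "0 \<le> orient a c u"
    using orient_swap[of c a u] by linarith
  then have "0 < orient a c d"
    using assms orient_triangle_sum[of c d u a] by linarith
  with \<open>0 \<le> orient a c u\<close> assms have "u \<in> convex hull {a, c, d}"
    by (intro mem_convex_hull_triangle) auto
  then show ?thesis
    by (rule subsetD[OF hull_mono, rotated]) auto
qed

lemma orient_pos_subset_interior_convex_hull:
  "{u. 0 < orient a b u \<and> 0 < orient b c u \<and> 0 < orient c d u \<and> 0 < orient d a u}
     \<subseteq> interior (convex hull {a, b, c, d})"
proof (rule interior_maximal)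
  show "open {u. 0 < orient a b u \<and> 0 < orient b c u \<and> 0 < orient c d u \<and> 0 < orient d a u}"
    unfolding orient_def by (intro open_Collect_conj open_Collect_less continuous_intros)
qed (use mem_convex_hull_quad in blast)

lemma orient_quad_root:
  fixes a b c d u :: complex and X :: real
  assumes "(u - b) * (u - d) + X * (u - a) * (u - c) = 0"
  shows "orient a b u * (cmod (u - d))\<^sup>2 = X * orient c d u * (cmod (u - a))\<^sup>2"
proof -
  define P Q where "P = (u - b) * cnj (u - a)" and "Q = (u - c) * cnj (u - d)"
  have "of_real ((cmod (u - d))\<^sup>2) * P + of_real (X * (cmod (u - a))\<^sup>2) * Q
      = ((u - b) * (u - d) + X * (u - a) * (u - c)) * cnj (u - a) * cnj (u - d)"
    unfolding P_def Q_def complex_norm_square of_real_mult by (simp add: algebra_simps)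
  also have "\<dots> = 0"
    using assms by simp
  finally have "Im (of_real ((cmod (u - d))\<^sup>2) * P + of_real (X * (cmod (u - a))\<^sup>2) * Q) = 0"
    by simp
  then have "(cmod (u - d))\<^sup>2 * Im P + X * (cmod (u - a))\<^sup>2 * Im Q = 0"
    by simp
  moreover have "Im P = orient a b u" "Im Q = - orient c d u"
    unfolding P_def Q_def orient_def by (simp_all add: algebra_simps)
  ultimately show ?thesis by (simp add: algebra_simps)
qed

lemma quad_root_opposite_edges:
  fixes a b c d u :: complex and X :: real
  assumes "(u - b) * (u - d) + X * (u - a) * (u - c) = 0" "0 < X" "u \<noteq> a" "u \<noteq> d"
  shows "sgn (orient a b u) = sgn (orient c d u)"
proof -
  have "sgn ((cmod (u - a))\<^sup>2) = 1" "sgn ((cmod (u - d))\<^sup>2) = 1" "sgn X = 1"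
    using assms(2-4) by simp_all
  then show ?thesis
    using arg_cong[OF orient_quad_root[OF assms(1)], of sgn] by (simp add: sgn_mult)
qed

lemma quad_root_not_vertex:
  fixes a b c d u :: complex and X :: real
  assumes "ccw_convex_quad a b c d" "X \<noteq> 0" "(u - b) * (u - d) + X * (u - a) * (u - c) = 0"
  shows "u \<notin> {a, b, c, d}"
proof -
  have "a \<noteq> b" "a \<noteq> c" "a \<noteq> d" "b \<noteq> c" "b \<noteq> d" "c \<noteq> d"
    using assms(1) left_turn_distinct unfolding ccw_convex_quad_def by metis+
  with assms(2,3) show ?thesis
    by auto
qed

lemma pos_of_paired_signs:
  fixes y1 y2 y3 y4 k1 k2 k3 k4 :: real
  assumes "0 < k1" "0 < k2" "0 < k3" "0 < k4"
    and "k1 * y1 + k3 * y3 = k2 * y2 + k4 * y4"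
    and "0 < y1 \<longleftrightarrow> 0 < y3" "0 < y2 \<longleftrightarrow> 0 < y4"
    and "0 < y1 + y2 + y3 + y4"
  shows "0 < y1 \<and> 0 < y2 \<and> 0 < y3 \<and> 0 < y4"
  \<comment> \<open>if y1 \<le> 0, the relation forces all four to be \<le> 0, contradicting the sum\<close>
  using assms by (smt (verit, best) mult_pos_pos zero_less_mult_pos)

lemma quad_root_in_interior:
  fixes a b c d u :: complex and X :: real
  assumes quad: "ccw_convex_quad a b c d" and "0 < X"
    and root: "(u - b) * (u - d) + X * (u - a) * (u - c) = 0"
  shows "u \<in> interior (convex hull {a, b, c, d})"
proof -
  have "u \<notin> {a, b, c, d}"
    using quad_root_not_vertex[OF quad _ root] \<open>0 < X\<close> by simp
  moreover have "(u - b) * (u - d) + X * (u - c) * (u - a) = 0"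
    using root by (simp add: mult.commute mult.left_commute)
  ultimately have "sgn (orient a b u) = sgn (orient c d u)" "sgn (orient b c u) = sgn (orient d a u)"
    using quad_root_opposite_edges[OF root \<open>0 < X\<close>]
      quad_root_opposite_edges[of u b d X c a] \<open>0 < X\<close> orient_swap[of c b u] orient_swap[of d a u]
    by (auto simp: sgn_minus)
  then have "0 < orient a b u \<longleftrightarrow> 0 < orient c d u" "0 < orient b c u \<longleftrightarrow> 0 < orient d a u"
    by (metis sgn_greater)+
  moreover have "0 < orient a b c" "0 < orient b c d" "0 < orient a c d" "0 < orient a b d"
    using quad orient_rotate[of c d a] orient_rotate[of a b d]
    unfolding ccw_convex_quad_def left_turn_iff_orient by auto
  ultimately have "0 < orient a b u \<and> 0 < orient b c u \<and> 0 < orient c d u \<and> 0 < orient d a u"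
    using pos_of_paired_signs[OF _ _ _ _ orient_quad_relation[of a c d b u]] orient_quad_sum[of a b u c d]
    by (simp add: mult_pos_pos)
  then show ?thesis
    using orient_pos_subset_interior_convex_hull by blast
qed

definition quad_pencil :: "complex \<Rightarrow> complex \<Rightarrow> complex \<Rightarrow> complex \<Rightarrow> real \<Rightarrow> complex poly" where
  "quad_pencil a b c d X = [:-b, 1:] * [:-d, 1:] + smult (of_real X) ([:-a, 1:] * [:-c, 1:])"

lemma poly_quad_pencil:
  "poly (quad_pencil a b c d X) u = (u - b) * (u - d) + X * (u - a) * (u - c)"
  unfolding quad_pencil_def by (simp add: algebra_simps)

lemma degree_quad_pencil:
  assumes "X \<noteq> -1"
  shows "degree (quad_pencil a b c d X) = 2"
proof -
  have "quad_pencil a b c d X = [:b * d + X * a * c, - b - d - X * (a + c), 1 + of_real X:]"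
    unfolding quad_pencil_def by (simp add: algebra_simps)
  moreover have "1 + complex_of_real X \<noteq> 0"
    using assms by (simp add: complex_eq_iff)
  ultimately show ?thesis
    by simp
qed

lemma quotient_eq_iff_quad_pencil_root:
  assumes "ccw_convex_quad a b c d" "0 < X"
  shows "- ((b - u) * (d - u)) / ((a - u) * (c - u)) = of_real X
         \<longleftrightarrow> poly (quad_pencil a b c d X) u = 0"
proof (cases "u = a \<or> u = c")
  case True
  then show ?thesis
    using quad_root_not_vertex[OF assms(1), of X u] assms(2) by (auto simp: poly_quad_pencil)
next
  case False
  then have "(a - u) * (c - u) \<noteq> 0"
    by auto
  then have "- ((b - u) * (d - u)) / ((a - u) * (c - u)) = of_real X
      \<longleftrightarrow> - ((b - u) * (d - u)) = of_real X * ((a - u) * (c - u))"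
    by (rule nonzero_divide_eq_eq)
  also have "\<dots> \<longleftrightarrow> poly (quad_pencil a b c d X) u = 0"
    unfolding poly_quad_pencil by (auto simp: algebra_simps)
  finally show ?thesis .
qed

lemma sum_order_roots_complex:
  fixes p :: "complex poly"
  assumes "p \<noteq> 0"
  shows "(\<Sum>u | poly p u = 0. order u p) = degree p"
proof -
  have "(\<Sum>u | poly p u = 0. order u p) = (\<Sum>u\<in>set_mset (proots p). count (proots p) u)"
    using assms by simp
  also have "\<dots> = degree p"
    by (simp add: size_multiset_overloaded_eq[symmetric] size_proots_complex)
  finally show ?thesis .
qed

theorem mainTheorem2:
  fixes z w :: complex and X :: real
  assumes "ccw_convex_quad 0 1 z w" and "X > 0"
  shows "let p = [:1, -1:] * [:w, -1:] + smult (complex_of_real X) ([:0, -1:] * [:z, -1:]);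
             S = {u :: complex. - ((1 - u) * (w - u)) / ((0 - u) * (z - u)) = complex_of_real X}
         in (\<forall>u. u \<in> S \<longleftrightarrow> poly p u = 0) \<and> degree p = 2 \<and>
            (\<Sum>u\<in>S. order u p) = 2 \<and>
            S \<subseteq> interior (convex hull {0, 1, z, w})"
proof -
  have p: "[:1, -1:] * [:w, -1:] + smult (complex_of_real X) ([:0, -1:] * [:z, -1:])
      = quad_pencil 0 1 z w X"
    unfolding quad_pencil_def by (simp add: algebra_simps)
  define S where "S = {u :: complex. - ((1 - u) * (w - u)) / ((0 - u) * (z - u)) = complex_of_real X}"
  have S: "S = {u. poly (quad_pencil 0 1 z w X) u = 0}"
    unfolding S_def quotient_eq_iff_quad_pencil_root[OF assms] by (rule refl)
  have deg: "degree (quad_pencil 0 1 z w X) = 2"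
    using assms(2) by (intro degree_quad_pencil) simp
  then have "quad_pencil 0 1 z w X \<noteq> 0"
    by auto
  then have "(\<Sum>u\<in>S. order u (quad_pencil 0 1 z w X)) = 2"
    unfolding S sum_order_roots_complex[OF \<open>quad_pencil 0 1 z w X \<noteq> 0\<close>] deg by simp
  moreover have "S \<subseteq> interior (convex hull {0, 1, z, w})"
    unfolding S poly_quad_pencil by (auto intro: quad_root_in_interior[OF assms])
  ultimately show ?thesis
    unfolding Let_def p S_def[symmetric] using deg S by blast
qed

end
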